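(* Let $X$ be a non-trivial vector space over a field $\mathbb{k}$, let $T:X\to X$ be a linear operator with no non-trivial finite dimensional invariant subspaces, and let $A\subseteq X$ be a $T$-independent set. Then $F(A,T)$ is a linear subspace of $X$ invariant for $T$, and for every $x\in F(A,T)$ and $a\in A$ the rational function $f_{x,a}=\frac{p_a}{q}\in\mathcal{R}$, where $q\in\mathcal{P}^*$ and $\{p_a\}_{a\in A}\in\mathcal{P}^{(A)}$ satisfy $q(T)x=\sum_{a\in A}p_a(T)a$, does not depend on the choice of such $q$ and $\{p_a\}$. Moreover, the map $J:F(A,T)\to\mathcal{R}^{(A)}$, $Jx=\{f_{x,a}\}_{a\in A}$, is well defined, linear, injective, and satisfies $JTx=M^{(A)}Jx$ for every $x\in F(A,T)$. In particular, $J(F(A,T))$ is invariant under $M^{(A)}$ and the restriction $T|_{F(A,T)}$ is similar (via $J$) to the restriction of $M^{(A)}$ to $J(F(A,T))$.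
   Context: $\mathcal{P}=\mathbb{k}[t]$, $\mathcal{P}^*=\mathcal{P}\setminus\{0\}$, $\mathcal{R}=\mathbb{k}(t)$. For a set $A$ and a vector space $Z$, $Z^{(A)}=\{z\in Z^A:\{\alpha\in A:z_\alpha\neq0\}\text{ is finite}\}$. $M:\mathcal{R}\to\mathcal{R}$ is $Mf(z)=zf(z)$ and $M^{(A)}$ on $\mathcal{R}^{(A)}$ is $(M^{(A)}f)_\alpha=Mf_\alpha$. Vectors $x_1,\dots,x_n\in X$ are $T$-independent if for any polynomials $p_1,\dots,p_n\in\mathcal{P}$ the equality $p_1(T)x_1+\dots+p_n(T)x_n=0$ implies $p_j=0$ for all $j$; a set $A\subseteq X$ is $T$-independent if any pairwise different $x_1,\dots,x_n\in A$ are $T$-independent. $E(A,T)=\mathrm{span}\bigl(\bigcup_{n\geq0}T^n(A)\bigr)$ and $F(A,T)=\bigcup_{p\in\mathcal{P}^*}p(T)^{-1}(E(A,T))$; equivalently $F(A,T)$ is the set of $x\in X$ for which $q(T)x=\sum_{a\in A}p_a(T)a$ for some $q\in\mathcal{P}^*$ and $\{p_a\}_{a\in A}\in\mathcal{P}^{(A)}$. A non-trivial subspace means one different from $\{0\}$; invariant means mapped into itself. *)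

theory Defs
  imports Main "HOL-Computational_Algebra.Polynomial" "HOL-Computational_Algebra.Fraction_Field"
begin

text \<open>A vector space X over a field 'k is the type 'x with scalar multiplication
  scale, assumed to satisfy vector_space scale.  Polynomials p in k[t] are 'k poly,
  rational functions k(t) are 'k poly fract.\<close>

definition poly_op :: "('k::field \<Rightarrow> 'x::ab_group_add \<Rightarrow> 'x) \<Rightarrow> ('x \<Rightarrow> 'x) \<Rightarrow> 'k poly \<Rightarrow> 'x \<Rightarrow> 'x" where
  "poly_op scale T p x = (\<Sum>i\<le>degree p. scale (coeff p i) ((T ^^ i) x))"

definition T_independent :: "('k::field \<Rightarrow> 'x::ab_group_add \<Rightarrow> 'x) \<Rightarrow> ('x \<Rightarrow> 'x) \<Rightarrow> 'x set \<Rightarrow> bool" where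
  "T_independent scale T A \<longleftrightarrow>
     (\<forall>(xs :: 'x list) (ps :: 'k poly list).
        set xs \<subseteq> A \<longrightarrow> distinct xs \<longrightarrow> length ps = length xs \<longrightarrow>
        (\<Sum>j<length xs. poly_op scale T (ps ! j) (xs ! j)) = 0 \<longrightarrow>
        (\<forall>j<length xs. ps ! j = 0))"

text \<open>Finitely supported families {p_a} in P^(A), represented as functions
  'x => 'k poly vanishing outside A with finite support.\<close>
definition fin_supp_on :: "'x set \<Rightarrow> ('x \<Rightarrow> 'b::zero) \<Rightarrow> bool" where
  "fin_supp_on A p \<longleftrightarrow> finite {a. p a \<noteq> 0} \<and> {a. p a \<noteq> 0} \<subseteq> A"

definition F_rep :: "('k::field \<Rightarrow> 'x::ab_group_add \<Rightarrow> 'x) \<Rightarrow> ('x \<Rightarrow> 'x) \<Rightarrow> 'x set \<Rightarrow> 'x \<Rightarrow> 'k poly \<Rightarrow> ('x \<Rightarrow> 'k poly) \<Rightarrow> bool" where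
  "F_rep scale T A x q p \<longleftrightarrow> q \<noteq> 0 \<and> fin_supp_on A p \<and>
     poly_op scale T q x = (\<Sum>a\<in>{a. p a \<noteq> 0}. poly_op scale T (p a) a)"

definition E_set :: "('k::field \<Rightarrow> 'x::ab_group_add \<Rightarrow> 'x) \<Rightarrow> ('x \<Rightarrow> 'x) \<Rightarrow> 'x set \<Rightarrow> 'x set" where
  "E_set scale T A = module.span scale (\<Union>n. (T ^^ n) ` A)"

definition F_set :: "('k::field \<Rightarrow> 'x::ab_group_add \<Rightarrow> 'x) \<Rightarrow> ('x \<Rightarrow> 'x) \<Rightarrow> 'x set \<Rightarrow> 'x set" where
  "F_set scale T A = (\<Union>p\<in>{p :: 'k poly. p \<noteq> 0}. (poly_op scale T p) -` E_set scale T A)"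

definition J_map :: "('k::field \<Rightarrow> 'x::ab_group_add \<Rightarrow> 'x) \<Rightarrow> ('x \<Rightarrow> 'x) \<Rightarrow> 'x set \<Rightarrow> 'x \<Rightarrow> 'x \<Rightarrow> 'k poly fract" where
  "J_map scale T A x =
     (let (q, p) = (SOME (q, p). F_rep scale T A x q p) in (\<lambda>a. Fract (p a) q))"

definition M_op :: "('x \<Rightarrow> 'k::field poly fract) \<Rightarrow> ('x \<Rightarrow> 'k poly fract)" where
  "M_op f = (\<lambda>a. Fract [:0, 1:] 1 * f a)"

definition R_scale :: "'k::field \<Rightarrow> ('x \<Rightarrow> 'k poly fract) \<Rightarrow> ('x \<Rightarrow> 'k poly fract)" where
  "R_scale c f = (\<lambda>a. Fract [:c:] 1 * f a)"

end

theory Submission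
  imports Defs
begin

(* Cross-multiplying two representations q(T)x = \<Sum> p_a(T)a and q'(T)x = \<Sum> p'_a(T)a gives
   \<Sum> (q' p_a - q p'_a)(T)a = 0, so T-independence forces p_a/q = p'_a/q'; the same computation
   makes J additive and turns r(T) into multiplication by r. J is injective because Jx = 0
   means q(T)x = 0 for some q \<noteq> 0, and then x, Tx, ..., T^(d-1)x (d = deg q) span a finite
   dimensional T-invariant subspace containing x, which must be {0}. *)

lemma T_independent_sum_eq_0:
  assumes "T_independent scale T A" and "finite B" "B \<subseteq> A"
    and "(\<Sum>b\<in>B. poly_op scale T (p b) b) = 0" and "a \<in> B"
  shows "p a = 0"
proof -
  obtain xs where xs: "set xs = B" "distinct xs"
    using finite_distinct_list[OF \<open>finite B\<close>] by blast
  have "(\<Sum>j<length xs. poly_op scale T (map p xs ! j) (xs ! j)) = (\<Sum>b\<in>B. poly_op scale T (p b) b)"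
    unfolding xs(1)[symmetric] sum.distinct_set_conv_list[OF xs(2)] sum_list_sum_nth
    by (simp add: atLeast0LessThan)
  then have "\<forall>j<length xs. map p xs ! j = 0"
    using assms xs unfolding T_independent_def
    by (elim allE[of _ xs] allE[of _ "map p xs"]) simp
  moreover obtain j where "j < length xs" "xs ! j = a"
    using \<open>a \<in> B\<close> xs(1) by (metis in_set_conv_nth)
  ultimately show ?thesis by auto
qed

locale linear_endomorphism = vector_space scale
  for scale :: "'k::field \<Rightarrow> 'x::ab_group_add \<Rightarrow> 'x" +
  fixes T :: "'x \<Rightarrow> 'x"
  assumes linear_T: "Vector_Spaces.linear scale scale T"
begin

sublocale T: Vector_Spaces.linear scale scale T
  by (rule linear_T)

abbreviation polyT :: "'k poly \<Rightarrow> 'x \<Rightarrow> 'x" where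
  "polyT \<equiv> poly_op scale T"

lemma polyT_eq_sum_le_degree:
  "degree p \<le> n \<Longrightarrow> polyT p x = (\<Sum>i\<le>n. scale (coeff p i) ((T ^^ i) x))"
  unfolding poly_op_def by (rule sum.mono_neutral_left) (auto simp: coeff_eq_0)

lemma polyT_0 [simp]: "polyT 0 x = 0"
  unfolding poly_op_def by simp

lemma polyT_pCons: "polyT (pCons a p) x = scale a x + T (polyT p x)"
proof -
  have "polyT (pCons a p) x = (\<Sum>i\<le>Suc (degree p). scale (coeff (pCons a p) i) ((T ^^ i) x))"
    by (rule polyT_eq_sum_le_degree) (simp add: degree_pCons_le)
  also have "\<dots> = scale a x + (\<Sum>i\<le>degree p. scale (coeff p i) ((T ^^ Suc i) x))"
    by (subst sum.atMost_Suc_shift) simp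
  also have "\<dots> = scale a x + T (polyT p x)"
    unfolding poly_op_def T.sum by (simp add: T.scale)
  finally show ?thesis .
qed

lemma polyT_add: "polyT p (x + y) = polyT p x + polyT p y"
  by (induction p) (auto simp: polyT_pCons T.add scale_right_distrib algebra_simps)

lemma polyT_zero [simp]: "polyT p 0 = 0"
  by (metis add_cancel_right_right polyT_add)

lemma polyT_diff: "polyT p (x - y) = polyT p x - polyT p y"
  by (metis add_diff_cancel_right' diff_add_cancel polyT_add)

lemma polyT_sum: "polyT p (sum f B) = (\<Sum>b\<in>B. polyT p (f b))"
  by (induction B rule: infinite_finite_induct) (auto simp: polyT_add)

lemma polyT_add_poly: "polyT (p + q) x = polyT p x + polyT q x"
proof (induction p arbitrary: q)
  case (pCons a p)
  obtain b q' where "q = pCons b q'" by (cases q) auto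
  then show ?case using pCons(2)[of q']
    by (simp add: polyT_pCons T.add scale_left_distrib algebra_simps)
qed simp

lemma polyT_diff_poly: "polyT (p - q) x = polyT p x - polyT q x"
  by (metis polyT_add_poly add_diff_cancel_right' diff_add_cancel eq_diff_eq)

lemma polyT_smult: "polyT (smult c p) x = scale c (polyT p x)"
  by (induction p) (auto simp: polyT_pCons T.scale scale_right_distrib)

lemma polyT_mult: "polyT (p * q) x = polyT p (polyT q x)"
  by (induction p) (auto simp: polyT_pCons polyT_add_poly polyT_smult)

lemma polyT_const: "polyT [:c:] x = scale c x"
  by (simp add: polyT_pCons)

lemma polyT_1 [simp]: "polyT 1 x = x"
  using polyT_const[of 1 x] by (simp flip: one_pCons)

lemma polyT_X: "polyT [:0, 1:] x = T x"
  by (simp add: polyT_pCons polyT_const)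

lemma polyT_monom: "polyT (monom 1 n) x = (T ^^ n) x"
  by (induction n) (auto simp: monom_Suc polyT_pCons polyT_const monom_0)

lemma polyT_in_span_powers:
  "degree p < d \<Longrightarrow> polyT p x \<in> span ((\<lambda>i. (T ^^ i) x) ` {..<d})"
  unfolding poly_op_def by (intro span_sum span_scale span_base) auto

subsection \<open>Cyclic subspaces\<close>

definition cyclic_subspace :: "'x \<Rightarrow> 'x set" where
  "cyclic_subspace x = range (\<lambda>r. polyT r x)"

lemma subspace_cyclic_subspace: "subspace (cyclic_subspace x)"
proof (rule subspaceI)
  show "0 \<in> cyclic_subspace x"
    unfolding cyclic_subspace_def by (metis polyT_0 rangeI)
  show "y + z \<in> cyclic_subspace x" if "y \<in> cyclic_subspace x" "z \<in> cyclic_subspace x" for y z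
    using that unfolding cyclic_subspace_def by (auto simp flip: polyT_add_poly)
  show "scale c y \<in> cyclic_subspace x" if "y \<in> cyclic_subspace x" for c y
    using that unfolding cyclic_subspace_def by (auto simp flip: polyT_smult)
qed

lemma T_cyclic_subspace: "T ` cyclic_subspace x \<subseteq> cyclic_subspace x"
  unfolding cyclic_subspace_def by (auto simp flip: polyT_X polyT_mult)

lemma self_in_cyclic_subspace: "x \<in> cyclic_subspace x"
  unfolding cyclic_subspace_def by (metis polyT_monom funpow_0 rangeI)

text \<open>Reduction of r modulo an annihilating polynomial q bounds the degree needed.\<close>

lemma span_powers_eq_cyclic_subspace:
  assumes "q \<noteq> 0" "polyT q x = 0"
  shows "span ((\<lambda>i. (T ^^ i) x) ` {..<degree q}) = cyclic_subspace x"
proof (rule span_subspace)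
  show "(\<lambda>i. (T ^^ i) x) ` {..<degree q} \<subseteq> cyclic_subspace x"
    unfolding cyclic_subspace_def by (auto simp flip: polyT_monom)
  show "cyclic_subspace x \<subseteq> span ((\<lambda>i. (T ^^ i) x) ` {..<degree q})"
  proof
    fix y assume "y \<in> cyclic_subspace x"
    then obtain r where y: "y = polyT r x" unfolding cyclic_subspace_def by blast
    have "polyT r x = polyT (r div q * q + r mod q) x" by simp
    also have "\<dots> = polyT (r mod q) x" by (simp only: polyT_add_poly polyT_mult assms(2)) simp
    finally have "y = polyT (r mod q) x" using y by simp
    moreover have "r mod q = 0 \<or> degree (r mod q) < degree q"
      by (rule degree_mod_less[OF assms(1)])
    ultimately show "y \<in> span ((\<lambda>i. (T ^^ i) x) ` {..<degree q})"
      using polyT_in_span_powers span_zero by fastforce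
  qed
qed (rule subspace_cyclic_subspace)

lemma polyT_eq_0_iff:
  assumes no_fd_inv: "\<And>Y. subspace Y \<Longrightarrow> Y \<noteq> {0} \<Longrightarrow> T ` Y \<subseteq> Y \<Longrightarrow> \<not> (\<exists>B. finite B \<and> span B = Y)"
    and "q \<noteq> 0"
  shows "polyT q x = 0 \<longleftrightarrow> x = 0"
proof
  assume "polyT q x = 0"
  then have "span ((\<lambda>i. (T ^^ i) x) ` {..<degree q}) = cyclic_subspace x"
    using span_powers_eq_cyclic_subspace \<open>q \<noteq> 0\<close> by blast
  then have "cyclic_subspace x = {0}"
    using no_fd_inv subspace_cyclic_subspace T_cyclic_subspace by blast
  then show "x = 0" using self_in_cyclic_subspace by blast
qed simp

lemma F_repD:
  assumes "F_rep scale T A x q p"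
  shows "q \<noteq> 0" "finite {a. p a \<noteq> 0}" "{a. p a \<noteq> 0} \<subseteq> A"
  using assms unfolding F_rep_def fin_supp_on_def by auto

lemma F_rep_iff_on:
  assumes "finite B" "B \<subseteq> A" "{a. p a \<noteq> 0} \<subseteq> B"
  shows "F_rep scale T A x q p \<longleftrightarrow> q \<noteq> 0 \<and> polyT q x = (\<Sum>a\<in>B. polyT (p a) a)"
proof -
  have "(\<Sum>a\<in>{a. p a \<noteq> 0}. polyT (p a) a) = (\<Sum>a\<in>B. polyT (p a) a)"
    using assms by (intro sum.mono_neutral_left) auto
  moreover have "fin_supp_on A p"
    using assms finite_subset unfolding fin_supp_on_def by blast
  ultimately show ?thesis unfolding F_rep_def by auto
qed

lemma F_rep_polyT_mult:
  assumes r: "F_rep scale T A x q p" and B: "finite B" "{a. p a \<noteq> 0} \<subseteq> B"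
  shows "polyT (q * s) x = (\<Sum>a\<in>B. polyT (p a * s) a)"
proof -
  have "polyT q x = (\<Sum>a\<in>{a. p a \<noteq> 0}. polyT (p a) a)"
    using r unfolding F_rep_def by simp
  also have "\<dots> = (\<Sum>a\<in>B. polyT (p a) a)"
    using B by (intro sum.mono_neutral_left) auto
  finally have "polyT s (polyT q x) = (\<Sum>a\<in>B. polyT s (polyT (p a) a))"
    by (simp add: polyT_sum)
  then show ?thesis
    by (simp only: polyT_mult mult.commute[of _ s])
qed

lemma F_rep_0: "F_rep scale T A 0 1 (\<lambda>_. 0)"
  unfolding F_rep_def fin_supp_on_def by simp

lemma F_rep_add:
  assumes r: "F_rep scale T A x q p" and r': "F_rep scale T A y q' p'"
  shows "F_rep scale T A (x + y) (q * q') (\<lambda>a. p a * q' + p' a * q)"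
proof -
  define B where "B = {a. p a \<noteq> 0} \<union> {a. p' a \<noteq> 0}"
  have B: "finite B" "B \<subseteq> A" using F_repD[OF r] F_repD[OF r'] unfolding B_def by auto
  have x: "polyT (q * q') x = (\<Sum>a\<in>B. polyT (p a * q') a)"
    by (rule F_rep_polyT_mult[OF r B(1)]) (auto simp: B_def)
  have y: "polyT (q * q') y = (\<Sum>a\<in>B. polyT (p' a * q) a)"
    by (subst mult.commute, rule F_rep_polyT_mult[OF r' B(1)]) (auto simp: B_def)
  have "polyT (q * q') (x + y) = (\<Sum>a\<in>B. polyT (p a * q' + p' a * q) a)"
    by (simp only: polyT_add x y polyT_add_poly sum.distrib)
  moreover have "{a. p a * q' + p' a * q \<noteq> 0} \<subseteq> B" by (auto simp: B_def)
  ultimately show ?thesis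
    using F_repD(1)[OF r] F_repD(1)[OF r'] F_rep_iff_on[OF B] by simp
qed

lemma F_rep_polyT:
  assumes r: "F_rep scale T A x q p"
  shows "F_rep scale T A (polyT s x) q (\<lambda>a. s * p a)"
proof -
  define B where "B = {a. p a \<noteq> 0}"
  have B: "finite B" "B \<subseteq> A" using F_repD[OF r] unfolding B_def by auto
  have "polyT q (polyT s x) = (\<Sum>a\<in>B. polyT (s * p a) a)"
    using F_rep_polyT_mult[OF r B(1), of s] by (simp add: B_def polyT_mult mult.commute)
  then show ?thesis
    using F_repD(1)[OF r] by (subst F_rep_iff_on[OF B]) (auto simp: B_def)
qed

lemma polyT_in_E_set: "a \<in> A \<Longrightarrow> polyT r a \<in> E_set scale T A"
  unfolding poly_op_def E_set_def by (intro span_sum span_scale span_base) blast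

lemma E_set_F_rep:
  assumes "y \<in> E_set scale T A"
  shows "\<exists>p. F_rep scale T A y 1 p"
proof -
  let ?R = "{y. \<exists>p. F_rep scale T A y 1 p}"
  have "subspace ?R"
  proof (rule subspaceI)
    show "0 \<in> ?R" using F_rep_0 by blast
    show "y + z \<in> ?R" if "y \<in> ?R" "z \<in> ?R" for y z
      using that F_rep_add[of A y 1 _ z 1] by fastforce
    show "scale c y \<in> ?R" if "y \<in> ?R" for c y
      using that F_rep_polyT[of A y 1 _ "[:c:]"] by (auto simp: polyT_const)
  qed
  moreover have "(T ^^ n) a \<in> ?R" if "a \<in> A" for n a
  proof -
    let ?p = "\<lambda>b. if b = a then monom 1 n else 0"
    have "F_rep scale T A ((T ^^ n) a) 1 ?p"
      using that by (subst F_rep_iff_on[of "{a}"]) (auto simp: polyT_const polyT_monom)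
    then show ?thesis by blast
  qed
  ultimately have "E_set scale T A \<subseteq> ?R"
    unfolding E_set_def by (intro span_minimal) auto
  with assms show ?thesis by blast
qed

lemma F_set_iff: "x \<in> F_set scale T A \<longleftrightarrow> (\<exists>q p. F_rep scale T A x q p)"
proof
  assume "x \<in> F_set scale T A"
  then obtain q where q: "q \<noteq> 0" "polyT q x \<in> E_set scale T A"
    unfolding F_set_def by auto
  then obtain p where "F_rep scale T A (polyT q x) 1 p"
    using E_set_F_rep by blast
  then have "F_rep scale T A x q p"
    using q unfolding F_rep_def by simp
  then show "\<exists>q p. F_rep scale T A x q p" by blast
next
  assume "\<exists>q p. F_rep scale T A x q p"
  then obtain q p where r: "F_rep scale T A x q p" by blast
  then have "polyT q x \<in> E_set scale T A"
    unfolding F_rep_def fin_supp_on_def E_set_def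
    using polyT_in_E_set[unfolded E_set_def] by (auto intro!: span_sum)
  then show "x \<in> F_set scale T A" using F_repD(1)[OF r] unfolding F_set_def by auto
qed

lemma polyT_F_set: "x \<in> F_set scale T A \<Longrightarrow> polyT r x \<in> F_set scale T A"
  using F_set_iff F_rep_polyT by meson

lemma subspace_F_set: "subspace (F_set scale T A)"
proof (rule subspaceI)
  show "0 \<in> F_set scale T A" using F_set_iff F_rep_0 by blast
  show "x + y \<in> F_set scale T A" if "x \<in> F_set scale T A" "y \<in> F_set scale T A" for x y
    using that F_set_iff F_rep_add by meson
  show "scale c x \<in> F_set scale T A" if "x \<in> F_set scale T A" for c x
    using polyT_F_set[OF that, of "[:c:]"] by (simp add: polyT_const)
qed

end

subsection \<open>The map J\<close>

locale T_independent_family = linear_endomorphism scale T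
  for scale :: "'k::field \<Rightarrow> 'x::ab_group_add \<Rightarrow> 'x" and T +
  fixes A :: "'x set"
  assumes T_independent: "T_independent scale T A"
begin

abbreviation F :: "'x set" where "F \<equiv> F_set scale T A"
abbreviation J :: "'x \<Rightarrow> 'x \<Rightarrow> 'k poly fract" where "J \<equiv> J_map scale T A"

lemma F_rep_cross_eq:
  assumes r: "F_rep scale T A x q p" and r': "F_rep scale T A x q' p'"
  shows "p a * q' = p' a * q"
proof -
  define B where "B = {a. p a \<noteq> 0} \<union> {a. p' a \<noteq> 0}"
  have B: "finite B" "B \<subseteq> A" using F_repD[OF r] F_repD[OF r'] unfolding B_def by auto
  have "(\<Sum>b\<in>B. polyT (p b * q') b) = polyT (q * q') x"
    by (rule F_rep_polyT_mult[OF r B(1), symmetric]) (auto simp: B_def)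
  also have "\<dots> = (\<Sum>b\<in>B. polyT (p' b * q) b)"
    by (subst mult.commute, rule F_rep_polyT_mult[OF r' B(1)]) (auto simp: B_def)
  finally have "(\<Sum>b\<in>B. polyT (p b * q' - p' b * q) b) = 0"
    by (simp add: polyT_diff_poly sum_subtractf)
  then have "a \<in> B \<Longrightarrow> p a * q' - p' a * q = 0"
    using T_independent_sum_eq_0[OF T_independent B, where p = "\<lambda>b. p b * q' - p' b * q"]
    by blast
  then show ?thesis by (cases "a \<in> B") (simp_all add: B_def)
qed

lemma F_rep_Fract_eq:
  assumes "F_rep scale T A x q p" "F_rep scale T A x q' p'"
  shows "Fract (p a) q = Fract (p' a) q'"
  using F_rep_cross_eq[OF assms] F_repD(1)[OF assms(1)] F_repD(1)[OF assms(2)]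
  by (simp add: eq_fract)

lemma J_map_eq:
  assumes r: "F_rep scale T A x q p"
  shows "J x = (\<lambda>a. Fract (p a) q)"
proof -
  obtain q0 p0 where c: "(SOME (q, p). F_rep scale T A x q p) = (q0, p0)" by fastforce
  have "\<exists>c. case c of (q, p) \<Rightarrow> F_rep scale T A x q p" using r by auto
  then have "F_rep scale T A x q0 p0" using someI_ex c by (metis case_prod_conv)
  then show ?thesis unfolding J_map_def c using F_rep_Fract_eq[OF _ r] by auto
qed

lemma J_map_apply: "F_rep scale T A x q p \<Longrightarrow> J x a = Fract (p a) q"
  by (simp add: J_map_eq)

lemma fin_supp_on_J_map:
  assumes "x \<in> F"
  shows "fin_supp_on A (J x)"
proof -
  obtain q p where r: "F_rep scale T A x q p" using assms F_set_iff by meson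
  have "Fract (p a) q = 0 \<longleftrightarrow> p a = 0" for a
    using F_repD(1)[OF r] by (simp add: Zero_fract_def eq_fract)
  then show ?thesis
    using r unfolding J_map_eq[OF r] F_rep_def fin_supp_on_def by simp
qed

lemma J_map_add:
  assumes "x \<in> F" "y \<in> F"
  shows "J (x + y) = (\<lambda>a. J x a + J y a)"
proof -
  obtain q p q' p' where r: "F_rep scale T A x q p" and r': "F_rep scale T A y q' p'"
    using assms F_set_iff by meson
  show ?thesis
    using F_repD(1)[OF r] F_repD(1)[OF r']
    by (simp add: J_map_eq[OF F_rep_add[OF r r']] J_map_eq[OF r] J_map_eq[OF r'])
qed

lemma J_map_polyT:
  assumes "x \<in> F"
  shows "J (polyT s x) = (\<lambda>a. Fract s 1 * J x a)"
proof -
  obtain q p where r: "F_rep scale T A x q p" using assms F_set_iff by meson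
  show ?thesis by (simp add: J_map_eq[OF F_rep_polyT[OF r]] J_map_eq[OF r])
qed

lemma J_map_scale: "x \<in> F \<Longrightarrow> J (scale c x) = R_scale c (J x)"
  using J_map_polyT[where s = "[:c:]"] by (simp add: polyT_const R_scale_def)

lemma J_map_T: "x \<in> F \<Longrightarrow> J (T x) = M_op (J x)"
  using J_map_polyT[where s = "[:0, 1:]"] by (simp add: polyT_X M_op_def)

lemma T_F_set: "T ` F \<subseteq> F"
  using polyT_F_set[where r = "[:0, 1:]"] by (auto simp: polyT_X)

lemma M_op_image_J_map: "M_op ` J ` F \<subseteq> J ` F"
  using J_map_T T_F_set by (auto simp flip: J_map_T)

lemma T_eq_the_inv_into:
  assumes "inj_on J F" "x \<in> F"
  shows "T x = the_inv_into F J (M_op (J x))"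
  using assms T_F_set the_inv_into_f_f[OF assms(1)] by (force simp flip: J_map_T)

lemma inj_on_J_map:
  assumes no_fd_inv: "\<And>Y. subspace Y \<Longrightarrow> Y \<noteq> {0} \<Longrightarrow> T ` Y \<subseteq> Y \<Longrightarrow> \<not> (\<exists>B. finite B \<and> span B = Y)"
  shows "inj_on J F"
proof (rule inj_onI)
  fix x y assume "x \<in> F" "y \<in> F" and J: "J x = J y"
  then obtain q p q' p' where r: "F_rep scale T A x q p" and r': "F_rep scale T A y q' p'"
    using F_set_iff by meson
  have q: "q \<noteq> 0" "q' \<noteq> 0" using F_repD(1)[OF r] F_repD(1)[OF r'] .
  have cross: "p a * q' = p' a * q" for a
    using fun_cong[OF J, of a] q unfolding J_map_eq[OF r] J_map_eq[OF r'] by (simp add: eq_fract)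
  define B where "B = {a. p a \<noteq> 0} \<union> {a. p' a \<noteq> 0}"
  have B: "finite B" using F_repD(2)[OF r] F_repD(2)[OF r'] unfolding B_def by auto
  have "polyT (q * q') x = (\<Sum>a\<in>B. polyT (p a * q') a)"
    by (rule F_rep_polyT_mult[OF r B]) (auto simp: B_def)
  also have "\<dots> = (\<Sum>a\<in>B. polyT (p' a * q) a)"
    by (simp only: cross)
  also have "\<dots> = polyT (q * q') y"
    by (subst mult.commute, rule F_rep_polyT_mult[OF r' B, symmetric]) (auto simp: B_def)
  finally have "polyT (q * q') (x - y) = 0" by (simp add: polyT_diff)
  then show "x = y" using polyT_eq_0_iff[OF no_fd_inv] q by simp
qed

end

theorem lemma2p3:
  fixes scale :: "'k::field \<Rightarrow> 'x::ab_group_add \<Rightarrow> 'x"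
    and T :: "'x \<Rightarrow> 'x" and A :: "'x set"
  assumes vs: "vector_space scale"
    and nontriv: "\<exists>x::'x. x \<noteq> 0"
    and lin: "Vector_Spaces.linear scale scale T"
    and no_fd_inv: "\<And>Y. module.subspace scale Y \<Longrightarrow> Y \<noteq> {0} \<Longrightarrow> T ` Y \<subseteq> Y \<Longrightarrow>
                        \<not> (\<exists>B. finite B \<and> module.span scale B = Y)"
    and indep: "T_independent scale T A"
  defines "F \<equiv> F_set scale T A" and "J \<equiv> J_map scale T A"
  shows "module.subspace scale F \<and> T ` F \<subseteq> F
    \<and> (\<forall>x\<in>F. \<forall>a\<in>A. \<forall>q p q' p'. F_rep scale T A x q p \<longrightarrow> F_rep scale T A x q' p' \<longrightarrow>
            Fract (p a) q = Fract (p' a) q')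
    \<and> (\<forall>x\<in>F. (\<exists>q p. F_rep scale T A x q p) \<and>
            (\<forall>q p. F_rep scale T A x q p \<longrightarrow> (\<forall>a\<in>A. J x a = Fract (p a) q)) \<and>
            fin_supp_on A (J x))
    \<and> (\<forall>x\<in>F. \<forall>y\<in>F. J (x + y) = (\<lambda>a. J x a + J y a))
    \<and> (\<forall>c. \<forall>x\<in>F. J (scale c x) = R_scale c (J x))
    \<and> inj_on J F
    \<and> (\<forall>x\<in>F. J (T x) = M_op (J x))
    \<and> M_op ` (J ` F) \<subseteq> J ` F
    \<and> bij_betw J F (J ` F)
    \<and> (\<forall>x\<in>F. T x = the_inv_into F J (M_op (J x)))"
proof -
  interpret T_independent_family scale T A
    using vs lin indep unfolding T_independent_family_def T_independent_family_axioms_def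
      linear_endomorphism_def linear_endomorphism_axioms_def by blast
  have inj: "inj_on (J_map scale T A) (F_set scale T A)"
    by (rule inj_on_J_map[OF no_fd_inv])
  show ?thesis
    unfolding F_def J_def
    by (intro conjI ballI allI impI subspace_F_set T_F_set inj M_op_image_J_map
        inj_on_imp_bij_betw[OF inj] T_eq_the_inv_into[OF inj] fin_supp_on_J_map
        J_map_add J_map_scale J_map_T J_map_apply F_rep_Fract_eq)
      (simp_all flip: F_set_iff)
qed

end
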